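(* Let $x_0>0$ and let $(U_n)_{n\ge1}$ be random utility functions satisfying: $\sup_n\|U_n^+(\cdot,x_0)\|_1<\infty$, $\sup_n\|U_n^-(\cdot,x_0)\|_1<\infty$ and $\sup_n\|U_n'(\cdot,x_0)\|_q<\infty$ for some $q>1$. Suppose that for all $\varepsilon\in(0,x_0)$ and all $C\ge0$, $$\lim_{n\to\infty}\inf_{P\in\mathcal Q^T}P\Big(\int_{x_0-\varepsilon/2}^{x_0}U_n''(\cdot,v)\,dv<-\frac C\varepsilon\Big)=1.$$ Then for all $0\le x<x_0$ and $M\ge0$, $\lim_{n\to\infty}\inf_{P\in\mathcal Q^T}P(U_n(\cdot,x)\le -M)=1$.
   Context: Framework: $T\ge1$; Polish spaces $\Omega_1,\dots,\Omega_T$; $\Omega^t:=\Omega_1\times\cdots\times\Omega_t$. $\mathfrak P(X)$: Borel probability measures on Polish $X$; $\mathcal B_c(X)$: universal $\sigma$-algebra, each $P$ extended to it. $\mathcal SK_t$: universally measurable stochastic kernels on $\Omega_t$ given $\Omega^{t-1}$; $P\otimes p(A):=\int\int1_A(\omega^{t-1},\omega_t)p(d\omega_t,\omega^{t-1})P(d\omega^{t-1})$. Given random sets $\mathcal Q_{t+1}:\Omega^t\twoheadrightarrow\mathfrak P(\Omega_{t+1})$, $\mathcal Q^T:=\{Q_1\otimes q_2\otimes\cdots\otimes q_T:Q_1\in\mathcal Q_1,\ q_{s+1}\in\mathcal SK_{s+1},\ q_{s+1}(\cdot,\omega^s)\in\mathcal Q_{s+1}(\omega^s)\ Q_s\text{-a.s.}\}$.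 For universally measurable $X$ on $\Omega^T$ and $r\in(0,\infty)$, $\|X\|_r:=(\sup_{P\in\mathcal Q^T}E_P|X|^r)^{1/r}$. A random utility function is $U:\Omega^T\times(0,\infty)\to\mathbb R$ with $U(\cdot,x)$ universally measurable for each $x>0$ and $U(\omega^T,\cdot)$ concave, strictly increasing and twice continuously differentiable on $(0,\infty)$ for each $\omega^T$, extended to $0$ by right-continuity and by $-\infty$ on $(-\infty,0)$; $U',U''$ are derivatives in $x$. *)

theory Defs
  imports "HOL-Probability.Probability"
begin

definition Polish_space :: "'a topology \<Rightarrow> bool" where
  "Polish_space X \<longleftrightarrow> completely_metrizable_space X \<and> separable_space X"

definition borel_of :: "'a topology \<Rightarrow> 'a measure" where
  "borel_of X = sigma (topspace X) {U. openin X U}"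

definition prob_meas :: "'a topology \<Rightarrow> 'a measure set" where
  "prob_meas X = {P. prob_space P \<and> sets P = sets (borel_of X)}"

definition universal_sets :: "'a topology \<Rightarrow> 'a set set" where
  "universal_sets X = Pow (topspace X) \<inter> (\<Inter>P\<in>prob_meas X. sets (completion P))"

definition univ_measurable :: "'a topology \<Rightarrow> ('a \<Rightarrow> real) \<Rightarrow> bool" where
  "univ_measurable X f \<longleftrightarrow> (\<forall>B\<in>sets borel. f -` B \<inter> topspace X \<in> universal_sets X)"

text \<open>\<open>\<Omega>^t\<close>, realised as functions on \<open>{1..t}\<close> (extensional, \<open>undefined\<close> elsewhere).\<close>
definition path_top :: "(nat \<Rightarrow> 'a topology) \<Rightarrow> nat \<Rightarrow> (nat \<Rightarrow> 'a) topology" where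
  "path_top X t = product_topology X {1..t}"

definition path_space :: "(nat \<Rightarrow> 'a topology) \<Rightarrow> nat \<Rightarrow> (nat \<Rightarrow> 'a) set" where
  "path_space X t = topspace (path_top X t)"

definition stoch_kernel :: "(nat \<Rightarrow> 'a topology) \<Rightarrow> nat \<Rightarrow> ((nat \<Rightarrow> 'a) \<Rightarrow> 'a measure) \<Rightarrow> bool" where
  "stoch_kernel X t p \<longleftrightarrow>
     (\<forall>\<omega>\<in>path_space X (t - 1). p \<omega> \<in> prob_meas (X t)) \<and>
     (\<forall>A\<in>sets (borel_of (X t)). univ_measurable (path_top X (t - 1)) (\<lambda>\<omega>. measure (p \<omega>) A))"

text \<open>\<open>P \<otimes> p\<close> for \<open>P\<close> on \<open>\<Omega>^(t-1)\<close> (extended to universal sets via its completion).\<close>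
definition kcomp :: "(nat \<Rightarrow> 'a topology) \<Rightarrow> nat \<Rightarrow> (nat \<Rightarrow> 'a) measure
     \<Rightarrow> ((nat \<Rightarrow> 'a) \<Rightarrow> 'a measure) \<Rightarrow> (nat \<Rightarrow> 'a) measure" where
  "kcomp X t P p = measure_of (path_space X t) (sets (borel_of (path_top X t)))
     (\<lambda>A. \<integral>\<^sup>+\<omega>. (\<integral>\<^sup>+y. indicator A (fun_upd \<omega> t y) \<partial>(p \<omega>)) \<partial>(completion P))"

text \<open>\<open>Q_1 \<otimes> q_2 \<otimes> ... \<otimes> q_t\<close>, starting from the point mass on the one-point space \<open>\<Omega>^0\<close>
  (so \<open>q 1\<close> plays the role of \<open>Q_1\<close>).\<close>
primrec kcomp_seq :: "(nat \<Rightarrow> 'a topology) \<Rightarrow> (nat \<Rightarrow> (nat \<Rightarrow> 'a) \<Rightarrow> 'a measure)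
     \<Rightarrow> nat \<Rightarrow> (nat \<Rightarrow> 'a) measure" where
  "kcomp_seq X q 0 = return (borel_of (path_top X 0)) (\<lambda>_. undefined)"
| "kcomp_seq X q (Suc t) = kcomp X (Suc t) (kcomp_seq X q t) (q (Suc t))"

text \<open>\<open>\<Q>^T\<close> for random sets \<open>Q (s+1) : \<Omega>^s \<rightrightarrows> \<P>(\<Omega>_(s+1))\<close>; \<open>Q 1\<close> is evaluated at the unique
  point of \<open>\<Omega>^0\<close> and represents \<open>\<Q>_1\<close>.\<close>
definition QT :: "(nat \<Rightarrow> 'a topology) \<Rightarrow> (nat \<Rightarrow> (nat \<Rightarrow> 'a) \<Rightarrow> 'a measure set) \<Rightarrow> nat
     \<Rightarrow> (nat \<Rightarrow> 'a) measure set" where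
  "QT X Q T = {kcomp_seq X q T | q. \<forall>t\<in>{1..T}. stoch_kernel X t (q t) \<and>
      (AE \<omega> in completion (kcomp_seq X q (t - 1)). q t \<omega> \<in> Q t \<omega>)}"

definition rnorm :: "(nat \<Rightarrow> 'a topology) \<Rightarrow> (nat \<Rightarrow> (nat \<Rightarrow> 'a) \<Rightarrow> 'a measure set) \<Rightarrow> nat
     \<Rightarrow> real \<Rightarrow> ((nat \<Rightarrow> 'a) \<Rightarrow> real) \<Rightarrow> ereal" where
  "rnorm X Q T r f =
     (let s = (SUP P\<in>QT X Q T. \<integral>\<^sup>+\<omega>. ennreal (\<bar>f \<omega>\<bar> powr r) \<partial>(completion P))
      in if s = \<infinity> then \<infinity> else ereal (enn2real s powr (1 / r)))"

definition random_utility :: "(nat \<Rightarrow> 'a topology) \<Rightarrow> nat \<Rightarrow> ((nat \<Rightarrow> 'a) \<Rightarrow> real \<Rightarrow> real) \<Rightarrow> bool" where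
  "random_utility X T U \<longleftrightarrow>
     (\<forall>x>0. univ_measurable (path_top X T) (\<lambda>\<omega>. U \<omega> x)) \<and>
     (\<forall>\<omega>\<in>path_space X T.
        concave_on {0<..} (U \<omega>) \<and> strict_mono_on {0<..} (U \<omega>) \<and>
        (\<forall>x>0. U \<omega> differentiable at x \<and> deriv (U \<omega>) differentiable at x) \<and>
        continuous_on {0<..} (deriv (deriv (U \<omega>))))"

definition util_ext :: "((nat \<Rightarrow> 'a) \<Rightarrow> real \<Rightarrow> real) \<Rightarrow> (nat \<Rightarrow> 'a) \<Rightarrow> real \<Rightarrow> ereal" where
  "util_ext U \<omega> x = (if x > 0 then ereal (U \<omega> x)
      else if x = 0 then Lim (at_right 0) (\<lambda>y. ereal (U \<omega> y)) else -\<infinity>)"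

end

theory Submission
  imports Defs
begin

text \<open>On the event where \<open>\<integral>\<^bsub>[x0 - \<epsilon>/2, x0]\<^esub> U'' < -C/\<epsilon>\<close>, the fundamental theorem of
  calculus gives \<open>U'(x0 - \<epsilon>/2) > C/\<epsilon>\<close>, and the tangent at \<open>x0 - \<epsilon>/2\<close> of the concave \<open>U\<close>
  then yields \<open>U(x0 - \<epsilon>) \<le> U(x0) - C/2\<close>. By Markov's inequality and the uniform \<open>L\<^sup>1\<close> bound
  on \<open>U\<^sup>+(x0)\<close>, the event \<open>U(x0) > K\<close> has uniformly small probability, so with \<open>C = 2(K + M)\<close>
  we get \<open>U(x) \<le> U(x0 - \<epsilon>) \<le> -M\<close> with probability close to 1 uniformly over \<open>\<Q>\<^sup>T\<close>.\<close>

lemma space_borel_of [simp]: "space (borel_of Y) = topspace Y"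
  unfolding borel_of_def by (rule space_measure_of_conv)

lemma fun_upd_in_path_space:
  assumes "\<omega> \<in> path_space X t" "y \<in> topspace (X (Suc t))"
  shows "fun_upd \<omega> (Suc t) y \<in> path_space X (Suc t)"
  using assms unfolding path_space_def path_top_def topspace_product_topology
  by (auto simp: PiE_def extensional_def Pi_def)

lemma space_kcomp: "space (kcomp X t P p) = path_space X t"
  unfolding kcomp_def by (rule space_measure_of_conv)

lemma sets_kcomp: "sets (kcomp X t P p) = sets (borel_of (path_top X t))"
proof -
  have "space (borel_of (path_top X t)) = path_space X t"
    by (simp add: path_space_def)
  then show ?thesis
    unfolding kcomp_def
    using sigma_algebra.sets_measure_of_eq[OF sets.sigma_algebra_axioms, of "borel_of (path_top X t)"]
    by simp
qed

lemma space_kcomp_seq: "space (kcomp_seq X q t) = path_space X t"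
  by (cases t) (simp_all add: space_kcomp path_space_def)

lemma sets_kcomp_seq: "sets (kcomp_seq X q t) = sets (borel_of (path_top X t))"
  by (cases t) (simp_all add: sets_kcomp)

text \<open>\<open>measure_of\<close> returns the zero measure when the set function is not a measure, so
  \<open>kcomp\<close> need not be a probability measure even for a probability \<open>P\<close>.\<close>

lemma kcomp_prob_space_or_null:
  assumes P: "prob_space P" "space P = path_space X t"
    and p: "stoch_kernel X (Suc t) p"
  shows "prob_space (kcomp X (Suc t) P p) \<or> (\<forall>A. emeasure (kcomp X (Suc t) P p) A = 0)"
proof -
  let ?\<Omega> = "path_space X (Suc t)"
  let ?F = "sigma_sets ?\<Omega> (sets (borel_of (path_top X (Suc t))))"
  define \<mu> where "\<mu> A = (\<integral>\<^sup>+\<omega>. (\<integral>\<^sup>+y. indicator A (fun_upd \<omega> (Suc t) y) \<partial>p \<omega>) \<partial>completion P)" for A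
  have emeasure_kcomp: "emeasure (kcomp X (Suc t) P p) =
      (\<lambda>A. if A \<in> ?F \<and> measure_space ?\<Omega> ?F \<mu> then \<mu> A else 0)"
    unfolding kcomp_def \<mu>_def by (rule emeasure_measure_of_conv)
  have "\<mu> ?\<Omega> = (\<integral>\<^sup>+\<omega>. 1 \<partial>completion P)"
    unfolding \<mu>_def
  proof (rule nn_integral_cong)
    fix \<omega> assume "\<omega> \<in> space (completion P)"
    then have \<omega>: "\<omega> \<in> path_space X t" using P by simp
    then have "prob_space (p \<omega>)" "sets (p \<omega>) = sets (borel_of (X (Suc t)))"
      using p by (auto simp: stoch_kernel_def prob_meas_def)
    moreover from this(2) have "space (p \<omega>) = topspace (X (Suc t))"
      by (metis sets_eq_imp_space_eq space_borel_of)
    then have "(\<integral>\<^sup>+y. indicator ?\<Omega> (fun_upd \<omega> (Suc t) y) \<partial>p \<omega>) = (\<integral>\<^sup>+y. 1 \<partial>p \<omega>)"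
      using fun_upd_in_path_space[OF \<omega>] by (intro nn_integral_cong) simp
    ultimately show "(\<integral>\<^sup>+y. indicator ?\<Omega> (fun_upd \<omega> (Suc t) y) \<partial>p \<omega>) = 1"
      by (simp add: prob_space.emeasure_space_1)
  qed
  also have "\<dots> = emeasure (completion P) (space (completion P))"
    by simp
  also have "\<dots> = 1"
    using P(1) by (simp add: prob_space.emeasure_space_1 prob_space.prob_space_completion)
  finally have "\<mu> ?\<Omega> = 1" .
  moreover have "?\<Omega> \<in> ?F"
    by (rule sigma_sets.Basic) (metis sets.top space_borel_of path_space_def)
  ultimately show ?thesis
    using emeasure_kcomp space_kcomp[of X "Suc t" P p]
    by (cases "measure_space ?\<Omega> ?F \<mu>") (simp_all add: prob_spaceI)
qed

lemma emeasure_completion_null: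
  assumes "\<forall>A. emeasure P A = 0"
  shows "emeasure (completion P) A = 0"
  using assms by (cases "A \<in> sets (completion P)") (auto simp: emeasure_notin_sets)

lemma null_measure_kcomp:
  assumes "\<forall>A. emeasure P A = 0"
  shows "\<forall>A. emeasure (kcomp X t P p) A = 0"
proof -
  have "AE \<omega> in completion P. f \<omega> = 0" for f :: "_ \<Rightarrow> ennreal"
    using assms by (intro AE_I'[of "space (completion P)"]) (auto simp: emeasure_completion_null)
  then have "(\<integral>\<^sup>+\<omega>. f \<omega> \<partial>completion P) = 0" for f :: "_ \<Rightarrow> ennreal"
    by (subst nn_integral_cong_AE[where v = "\<lambda>_. 0"]) auto
  then show ?thesis
    unfolding kcomp_def by (simp add: emeasure_measure_of_conv)
qed

lemma kcomp_seq_prob_space_or_null: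
  assumes "\<forall>s\<in>{1..t}. stoch_kernel X s (q s)"
  shows "prob_space (kcomp_seq X q t) \<or> (\<forall>A. emeasure (kcomp_seq X q t) A = 0)"
  using assms
proof (induction t)
  case 0
  have "(\<lambda>_. undefined) \<in> path_space X 0"
    by (simp add: path_space_def path_top_def topspace_product_topology)
  then show ?case
    by (auto intro!: prob_space_return simp: path_space_def)
next
  case (Suc t)
  have p: "stoch_kernel X (Suc t) (q (Suc t))"
    using Suc.prems by simp
  from Suc consider "prob_space (kcomp_seq X q t)" | "\<forall>A. emeasure (kcomp_seq X q t) A = 0"
    by fastforce
  then show ?case
  proof cases
    case 1
    then show ?thesis
      using kcomp_prob_space_or_null[OF 1 space_kcomp_seq p] by simp
  next
    case 2
    then show ?thesis
      using null_measure_kcomp[OF 2] by simp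
  qed
qed

lemma QT_prob_space_or_null:
  assumes "P \<in> QT X Q T"
  shows "prob_space P \<or> (\<forall>A. emeasure P A = 0)"
proof -
  from assms obtain q where "P = kcomp_seq X q T" "\<forall>t\<in>{1..T}. stoch_kernel X t (q t)"
    unfolding QT_def by auto
  then show ?thesis
    using kcomp_seq_prob_space_or_null by simp
qed

lemma space_QT: "P \<in> QT X Q T \<Longrightarrow> space P = path_space X T"
  and sets_QT: "P \<in> QT X Q T \<Longrightarrow> sets P = sets (borel_of (path_top X T))"
  unfolding QT_def by (auto simp: space_kcomp_seq sets_kcomp_seq)

lemma concave_le_of_integral_deriv2_less:
  fixes u :: "real \<Rightarrow> real"
  assumes conc: "concave_on {0<..} u" and mono: "mono_on {0<..} u"
    and diff: "\<forall>z>0. u differentiable at z \<and> deriv u differentiable at z"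
    and x: "0 < x" "x < x0"
    and curv: "integral {x0 - (x0 - x) / 2..x0} (deriv (deriv u)) < - C / (x0 - x)"
  shows "u x \<le> u x0 - C / 2"
proof -
  define e where "e = x0 - x"
  define y where "y = x0 - e / 2"
  have e: "e > 0" and y: "0 < y" "y < x0" "x < y" "y - x = e / 2"
    using x by (auto simp: y_def e_def field_simps)
  have u': "(u has_real_derivative deriv u z) (at z)" if "z > 0" for z
    using diff that DERIV_deriv_iff_real_differentiable by blast
  have u'': "(deriv u has_real_derivative deriv (deriv u) z) (at z)" if "z > 0" for z
    using diff that DERIV_deriv_iff_real_differentiable by blast
  have "(deriv (deriv u) has_integral (deriv u x0 - deriv u y)) {y..x0}"
    using y by (intro fundamental_theorem_of_calculus)
      (auto intro!: has_field_derivative_at_within u''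
        simp flip: has_real_derivative_iff_has_vector_derivative)
  then have "deriv u x0 - deriv u y < - C / e"
    using curv by (simp add: integral_unique y_def e_def)
  moreover have "deriv u x0 \<ge> 0"
    by (rule mono_on_imp_deriv_nonneg[OF mono u']) (use x in \<open>auto simp: interior_open\<close>)
  ultimately have slope: "C / e \<le> deriv u y"
    by simp
  have "(- u x) - (- u y) \<ge> (- deriv u y) * (x - y)"
    using conc unfolding concave_on_def
    by (rule convex_on_imp_above_tangent)
      (use y x in \<open>auto intro!: derivative_eq_intros has_field_derivative_at_within[OF u'] simp: interior_open\<close>)
  then have "u x \<le> u y - deriv u y * (y - x)"
    by (simp add: algebra_simps)
  also have "\<dots> \<le> u y - C / 2"
  proof -
    have "C / 2 = C / e * (y - x)"
      using y(4) e by (simp add: field_simps)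
    also have "\<dots> \<le> deriv u y * (y - x)"
      using slope y by (intro mult_right_mono) auto
    finally show ?thesis by simp
  qed
  also have "u y \<le> u x0"
    using mono y by (intro mono_onD[OF mono]) auto
  finally show ?thesis by simp
qed

lemma mono_on_tendsto_at_right_0_INF:
  fixes u :: "real \<Rightarrow> real"
  assumes mono: "mono_on {0<..} u"
  shows "((\<lambda>y. ereal (u y)) \<longlongrightarrow> (INF k. ereal (u (1 / Suc k)))) (at_right 0)"
proof (rule order_tendstoI)
  fix a assume a: "a < (INF k. ereal (u (1 / Suc k)))"
  show "\<forall>\<^sub>F y in at_right 0. a < ereal (u y)"
    using eventually_at_right_less[of "0::real"]
  proof (rule eventually_mono)
    fix y :: real assume y: "0 < y"
    obtain k :: nat where k: "1 / Suc k < y"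
      using y by (metis nat_approx_posE)
    have "a < ereal (u (1 / Suc k))"
      using a by (rule order_less_le_trans) (rule INF_lower, simp)
    also have "u (1 / Suc k) \<le> u y"
      using k y by (intro mono_onD[OF mono]) auto
    finally show "a < ereal (u y)" by simp
  qed
next
  fix a assume "(INF k. ereal (u (1 / Suc k))) < a"
  then obtain k where k: "ereal (u (1 / Suc k)) < a"
    by (auto simp: INF_less_iff)
  have "ereal (u y) < a" if "0 < y" "y < 1 / Suc k" for y
  proof -
    have "u y \<le> u (1 / Suc k)"
      using that by (intro mono_onD[OF mono]) auto
    then show ?thesis
      using k by (meson ereal_less_eq(3) order_le_less_trans)
  qed
  then show "\<forall>\<^sub>F y in at_right 0. ereal (u y) < a"
    unfolding eventually_at_right_field by (intro exI[of _ "1 / Suc k"]) auto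
qed

lemma util_ext_0_eq_INF:
  assumes "mono_on {0<..} (U \<omega>)"
  shows "util_ext U \<omega> 0 = (INF k. ereal (U \<omega> (1 / Suc k)))"
  using tendsto_Lim[OF _ mono_on_tendsto_at_right_0_INF[OF assms]]
  by (simp add: util_ext_def)

lemma util_ext_le:
  assumes mono: "mono_on {0<..} (U \<omega>)" and "0 \<le> x" "x \<le> y" "0 < y"
  shows "util_ext U \<omega> x \<le> ereal (U \<omega> y)"
proof (cases "x = 0")
  case True
  obtain k :: nat where k: "1 / Suc k < y"
    using \<open>0 < y\<close> by (metis nat_approx_posE)
  have "util_ext U \<omega> x \<le> ereal (U \<omega> (1 / Suc k))"
    unfolding True util_ext_0_eq_INF[of U \<omega>, OF mono] by (rule INF_lower) simp
  also have "U \<omega> (1 / Suc k) \<le> U \<omega> y"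
    using k \<open>0 < y\<close> by (intro mono_onD[OF mono]) auto
  finally show ?thesis by simp
next
  case False
  with \<open>0 \<le> x\<close> have "0 < x" by simp
  then have "U \<omega> x \<le> U \<omega> y"
    using \<open>x \<le> y\<close> by (intro mono_onD[OF mono]) auto
  then show ?thesis
    using \<open>0 < x\<close> by (simp add: util_ext_def)
qed

lemma borel_measurable_util_ext:
  assumes mono: "\<forall>\<omega>\<in>space M. mono_on {0<..} (U \<omega>)"
    and meas: "\<forall>y>0. (\<lambda>\<omega>. U \<omega> y) \<in> borel_measurable M"
  shows "(\<lambda>\<omega>. util_ext U \<omega> x) \<in> borel_measurable M"
proof -
  consider "x < 0" | "x = 0" | "x > 0" by linarith
  then show ?thesis
  proof cases
    case 1
    then have "(\<lambda>\<omega>. util_ext U \<omega> x) = (\<lambda>_. - \<infinity>)"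
      by (simp add: util_ext_def)
    then show ?thesis
      by (metis borel_measurable_const)
  next
    case 2
    have "\<And>k. (\<lambda>\<omega>. U \<omega> (1 / Suc k)) \<in> borel_measurable M"
      using meas by simp
    then have "(\<lambda>\<omega>. INF k. ereal (U \<omega> (1 / Suc k))) \<in> borel_measurable M"
      by measurable
    moreover have "\<And>\<omega>. \<omega> \<in> space M \<Longrightarrow> util_ext U \<omega> x = (INF k. ereal (U \<omega> (1 / Suc k)))"
      using mono 2 util_ext_0_eq_INF by blast
    ultimately show ?thesis
      by (metis (no_types, lifting) measurable_cong)
  next
    case 3
    then have "(\<lambda>\<omega>. util_ext U \<omega> x) = (\<lambda>\<omega>. ereal (U \<omega> x))"
      by (simp add: util_ext_def)
    moreover have "(\<lambda>\<omega>. U \<omega> x) \<in> borel_measurable M"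
      using meas 3 by simp
    ultimately show ?thesis
      by (metis borel_measurable_ereal)
  qed
qed

lemma borel_measurable_completion_if_univ_measurable:
  assumes "P \<in> prob_meas Y" "univ_measurable Y f"
  shows "f \<in> borel_measurable (completion P)"
proof (rule measurableI)
  have "sets P = sets (borel_of Y)"
    using assms(1) by (simp add: prob_meas_def)
  then have "space P = topspace Y"
    by (metis sets_eq_imp_space_eq space_borel_of)
  moreover fix A :: "real set" assume "A \<in> sets borel"
  ultimately show "f -` A \<inter> space (completion P) \<in> sets (completion P)"
    using assms by (auto simp: univ_measurable_def universal_sets_def)
qed simp

lemma (in finite_measure) measure_greater_le_nn_integral:
  assumes f: "f \<in> borel_measurable M" and K: "0 < K"
    and B: "(\<integral>\<^sup>+\<omega>. ennreal (f \<omega>) \<partial>M) \<le> ennreal B" "0 \<le> B"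
  shows "measure M {\<omega>\<in>space M. K < f \<omega>} \<le> B / K"
proof -
  let ?S = "{\<omega>\<in>space M. K < f \<omega>}"
  have S: "?S \<in> sets M"
    using f by measurable
  have "ennreal K * emeasure M ?S = (\<integral>\<^sup>+\<omega>. ennreal K * indicator ?S \<omega> \<partial>M)"
    using S by (simp add: nn_integral_cmult_indicator)
  also have "\<dots> \<le> (\<integral>\<^sup>+\<omega>. ennreal (f \<omega>) \<partial>M)"
    using K by (intro nn_integral_mono) (auto simp: indicator_def intro: ennreal_leI)
  finally have "ennreal (K * measure M ?S) \<le> ennreal B"
    using K B by (simp add: emeasure_eq_measure ennreal_mult)
  then have "measure M ?S * K \<le> B"
    using B(2) by (simp add: mult.commute)
  then show ?thesis
    using K by (simp add: pos_le_divide_eq)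
qed

lemma measure_util_ext_le_lower_bound:
  fixes U :: "(nat \<Rightarrow> 'a) \<Rightarrow> real \<Rightarrow> real" and M :: "(nat \<Rightarrow> 'a) measure"
  assumes M: "prob_space M"
    and utility: "\<And>\<omega>. \<omega> \<in> space M \<Longrightarrow> concave_on {0<..} (U \<omega>) \<and> mono_on {0<..} (U \<omega>) \<and>
        (\<forall>z>0. U \<omega> differentiable at z \<and> deriv (U \<omega>) differentiable at z)"
    and meas: "\<forall>y>0. (\<lambda>\<omega>. U \<omega> y) \<in> borel_measurable M"
    and B: "(\<integral>\<^sup>+\<omega>. ennreal (max (U \<omega> x0) 0) \<partial>M) \<le> ennreal B" "0 \<le> B"
    and K: "0 < K" and \<epsilon>: "0 < \<epsilon>" "\<epsilon> < x0" and x: "0 \<le> x" "x \<le> x0 - \<epsilon>"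
  shows "measure M {\<omega>\<in>space M. integral {x0 - \<epsilon>/2..x0} (deriv (deriv (U \<omega>))) < - (2 * (K + L)) / \<epsilon>}
           - B / K \<le> measure M {\<omega>\<in>space M. util_ext U \<omega> x \<le> - ereal L}"
proof -
  interpret prob_space M by (rule M)
  define A where "A = {\<omega>\<in>space M. integral {x0 - \<epsilon>/2..x0} (deriv (deriv (U \<omega>))) < - (2 * (K + L)) / \<epsilon>}"
  define S where "S = {\<omega>\<in>space M. util_ext U \<omega> x \<le> - ereal L}"
  define Large where "Large = {\<omega>\<in>space M. K < max (U \<omega> x0) 0}"
  have U_x0: "(\<lambda>\<omega>. U \<omega> x0) \<in> borel_measurable M"
    using meas \<epsilon> by simp
  have "(\<lambda>\<omega>. util_ext U \<omega> x) \<in> borel_measurable M"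
    using utility meas by (intro borel_measurable_util_ext) auto
  then have S_sets: "S \<in> sets M"
    unfolding S_def by measurable
  have Large_sets: "Large \<in> sets M"
    unfolding Large_def using U_x0 by measurable
  have "A \<subseteq> S \<union> Large"
  proof
    fix \<omega> assume "\<omega> \<in> A"
    then have \<omega>: "\<omega> \<in> space M"
      and curv: "integral {x0 - (x0 - (x0 - \<epsilon>)) / 2..x0} (deriv (deriv (U \<omega>))) < - (2 * (K + L)) / (x0 - (x0 - \<epsilon>))"
      by (simp_all add: A_def)
    show "\<omega> \<in> S \<union> Large"
    proof (cases "U \<omega> x0 \<le> K")
      case True
      have "util_ext U \<omega> x \<le> ereal (U \<omega> (x0 - \<epsilon>))"
        using utility[OF \<omega>] \<epsilon> x by (intro util_ext_le) auto
      also have "U \<omega> (x0 - \<epsilon>) \<le> U \<omega> x0 - 2 * (K + L) / 2"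
        using utility[OF \<omega>] \<epsilon> curv by (intro concave_le_of_integral_deriv2_less) auto
      also have "\<dots> \<le> - L"
        using True by (simp add: field_simps)
      finally show ?thesis
        using \<omega> by (simp add: S_def)
    next
      case False
      then show ?thesis
        using \<omega> by (simp add: Large_def less_max_iff_disj)
    qed
  qed
  then have "measure M A \<le> measure M (S \<union> Large)"
    using S_sets Large_sets by (intro finite_measure_mono) auto
  also have "\<dots> \<le> measure M S + measure M Large"
    using S_sets Large_sets by (rule measure_Un_le)
  also have "measure M Large \<le> B / K"
    unfolding Large_def using U_x0 K B by (intro measure_greater_le_nn_integral) auto
  finally show ?thesis
    by (simp add: A_def S_def)
qed

lemma tendsto_INF_ereal_1D:
  fixes f :: "nat \<Rightarrow> 'b \<Rightarrow> real"
  assumes lim: "(\<lambda>n. INF P\<in>\<P>. ereal (f n P)) \<longlonglongrightarrow> 1" and \<delta>: "0 < \<delta>"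
  shows "\<forall>\<^sub>F n in sequentially. \<forall>P\<in>\<P>. 1 - \<delta> < f n P"
proof -
  have "\<forall>\<^sub>F n in sequentially. ereal (1 - \<delta>) < (INF P\<in>\<P>. ereal (f n P))"
    using \<delta> by (intro order_tendstoD(1)[OF lim]) simp
  then show ?thesis
  proof (rule eventually_mono)
    fix n assume less: "ereal (1 - \<delta>) < (INF P\<in>\<P>. ereal (f n P))"
    show "\<forall>P\<in>\<P>. 1 - \<delta> < f n P"
    proof
      fix P assume "P \<in> \<P>"
      with less have "ereal (1 - \<delta>) < ereal (f n P)"
        by (rule less_INF_D)
      then show "1 - \<delta> < f n P" by simp
    qed
  qed
qed

lemma tendsto_INF_ereal_1I:
  fixes f :: "nat \<Rightarrow> 'b \<Rightarrow> real"
  assumes "\<P> \<noteq> {}" and le_1: "\<And>n P. P \<in> \<P> \<Longrightarrow> f n P \<le> 1"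
    and lower: "\<And>\<delta>. 0 < \<delta> \<Longrightarrow> \<forall>\<^sub>F n in sequentially. \<forall>P\<in>\<P>. 1 - \<delta> < f n P"
  shows "(\<lambda>n. INF P\<in>\<P>. ereal (f n P)) \<longlonglongrightarrow> 1"
proof (rule order_tendstoI)
  fix a :: ereal assume "a < 1"
  then obtain r where r: "a < ereal r" "ereal r < 1"
    by (blast dest: ereal_dense2)
  have "\<forall>\<^sub>F n in sequentially. \<forall>P\<in>\<P>. r < f n P"
    using lower[of "1 - r"] r(2) by simp
  then show "\<forall>\<^sub>F n in sequentially. a < (INF P\<in>\<P>. ereal (f n P))"
  proof eventually_elim
    case (elim n)
    then have "ereal r \<le> (INF P\<in>\<P>. ereal (f n P))"
      by (intro INF_greatest) (auto intro: less_imp_le)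
    with r(1) show ?case
      by (rule order_less_le_trans)
  qed
next
  fix a :: ereal assume a: "1 < a"
  obtain P where P: "P \<in> \<P>"
    using assms(1) by auto
  have "(INF P\<in>\<P>. ereal (f n P)) < a" for n
  proof -
    have "(INF P\<in>\<P>. ereal (f n P)) \<le> ereal (f n P)"
      using P by (rule INF_lower)
    also have "\<dots> \<le> 1"
      using le_1[OF P] by simp
    finally show ?thesis
      using a by simp
  qed
  then show "\<forall>\<^sub>F n in sequentially. (INF P\<in>\<P>. ereal (f n P)) < a"
    by simp
qed

lemma tendsto_INF_ereal_1_nonempty:
  assumes "(\<lambda>n. INF P\<in>\<P>. ereal (f n P)) \<longlonglongrightarrow> 1"
  shows "\<P> \<noteq> {}"
proof
  assume "\<P> = {}"
  then have "(\<lambda>n. \<infinity> :: ereal) \<longlonglongrightarrow> 1"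
    using assms by (simp add: top_ereal_def)
  then have "(\<infinity> :: ereal) = 1"
    by (simp add: LIMSEQ_const_iff)
  then show False by simp
qed

lemma prob_space_if_INF_measure_tendsto_1:
  assumes lim: "(\<lambda>n. INF P\<in>\<P>. ereal (measure (completion P) (A n))) \<longlonglongrightarrow> 1"
    and P: "P \<in> \<P>" "prob_space P \<or> (\<forall>A. emeasure P A = 0)"
  shows "prob_space P"
proof (rule ccontr)
  assume "\<not> prob_space P"
  then have "emeasure (completion P) (A n) = 0" for n
    using P(2) by (simp add: emeasure_completion_null)
  then have "measure (completion P) (A n) = 0" for n
    by (simp add: measure_def)
  moreover have "\<forall>\<^sub>F n in sequentially. \<forall>P\<in>\<P>. 1 - 1 < measure (completion P) (A n)"
    by (rule tendsto_INF_ereal_1D[OF lim]) simp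
  then have "\<forall>\<^sub>F n in sequentially. 0 < measure (completion P) (A n)"
    by (rule eventually_mono) (use P(1) in simp)
  ultimately show False
    by simp
qed

lemma nn_integral_le_rnorm_1:
  assumes "rnorm X Q T 1 f \<le> ereal B" and "P \<in> QT X Q T"
  shows "(\<integral>\<^sup>+\<omega>. ennreal \<bar>f \<omega>\<bar> \<partial>completion P) \<le> ennreal B"
proof -
  define s where "s = (SUP P\<in>QT X Q T. \<integral>\<^sup>+\<omega>. ennreal (\<bar>f \<omega>\<bar> powr 1) \<partial>completion P)"
  have rnorm: "rnorm X Q T 1 f = (if s = \<infinity> then \<infinity> else ereal (enn2real s))"
    unfolding rnorm_def s_def Let_def by simp
  have "(\<integral>\<^sup>+\<omega>. ennreal \<bar>f \<omega>\<bar> \<partial>completion P) \<le> s"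
    unfolding s_def using assms(2) by (auto intro!: SUP_upper2)
  also have "\<dots> = ennreal (enn2real s)"
    using assms(1) rnorm by (auto simp: ennreal_enn2real_if split: if_splits)
  also have "\<dots> \<le> ennreal B"
    using assms(1) rnorm by (auto intro: ennreal_leI split: if_splits)
  finally show ?thesis .
qed

lemma nn_integral_bounded_if_SUP_rnorm_1:
  assumes "(SUP n. rnorm X Q T 1 (f n)) < \<infinity>"
  obtains B where "0 \<le> B"
    and "\<And>n P. P \<in> QT X Q T \<Longrightarrow> (\<integral>\<^sup>+\<omega>. ennreal \<bar>f n \<omega>\<bar> \<partial>completion P) \<le> ennreal B"
proof
  define B where "B = max 0 (real_of_ereal (SUP n. rnorm X Q T 1 (f n)))"
  show "0 \<le> B"
    by (simp add: B_def)
  have "(SUP n. rnorm X Q T 1 (f n)) \<le> ereal B"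
    using assms by (cases "SUP n. rnorm X Q T 1 (f n)") (auto simp: B_def)
  moreover have "rnorm X Q T 1 (f n) \<le> (SUP n. rnorm X Q T 1 (f n))" for n
    by (rule SUP_upper) simp
  ultimately show "(\<integral>\<^sup>+\<omega>. ennreal \<bar>f n \<omega>\<bar> \<partial>completion P) \<le> ennreal B" if "P \<in> QT X Q T" for n P
    using that by (intro nn_integral_le_rnorm_1) (rule order_trans)
qed

lemma random_utility_concave_mono_differentiable:
  assumes "random_utility X T U" and "\<omega> \<in> path_space X T"
  shows "concave_on {0<..} (U \<omega>) \<and> mono_on {0<..} (U \<omega>) \<and>
    (\<forall>z>0. U \<omega> differentiable at z \<and> deriv (U \<omega>) differentiable at z)"
  using assms strict_mono_on_imp_mono_on unfolding random_utility_def by blast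

lemma borel_measurable_random_utility:
  assumes "random_utility X T U" and "P \<in> QT X Q T" "prob_space P"
  shows "\<forall>y>0. (\<lambda>\<omega>. U \<omega> y) \<in> borel_measurable (completion P)"
proof (intro allI impI)
  fix y :: real assume "0 < y"
  then have "univ_measurable (path_top X T) (\<lambda>\<omega>. U \<omega> y)"
    using assms(1) unfolding random_utility_def by blast
  moreover have "P \<in> prob_meas (path_top X T)"
    using assms(3) sets_QT[OF assms(2)] by (simp add: prob_meas_def)
  ultimately show "(\<lambda>\<omega>. U \<omega> y) \<in> borel_measurable (completion P)"
    by (intro borel_measurable_completion_if_univ_measurable)
qed

lemma tendsto_INF_measure_util_ext_le:
  fixes U :: "nat \<Rightarrow> (nat \<Rightarrow> 'a) \<Rightarrow> real \<Rightarrow> real" and \<mu> :: "'p \<Rightarrow> (nat \<Rightarrow> 'a) measure"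
  assumes ne: "\<P> \<noteq> {}"
    and prob: "\<And>P. P \<in> \<P> \<Longrightarrow> prob_space (\<mu> P)"
    and space: "\<And>P. P \<in> \<P> \<Longrightarrow> space (\<mu> P) = \<Omega>"
    and utility: "\<And>n \<omega>. \<omega> \<in> \<Omega> \<Longrightarrow> concave_on {0<..} (U n \<omega>) \<and> mono_on {0<..} (U n \<omega>) \<and>
        (\<forall>z>0. U n \<omega> differentiable at z \<and> deriv (U n \<omega>) differentiable at z)"
    and meas: "\<And>n P. P \<in> \<P> \<Longrightarrow> \<forall>y>0. (\<lambda>\<omega>. U n \<omega> y) \<in> borel_measurable (\<mu> P)"
    and bound: "\<And>n P. P \<in> \<P> \<Longrightarrow> (\<integral>\<^sup>+\<omega>. ennreal (max (U n \<omega> x0) 0) \<partial>\<mu> P) \<le> ennreal B" "0 \<le> B"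
    and curv: "\<And>\<epsilon> C. 0 < \<epsilon> \<Longrightarrow> \<epsilon> < x0 \<Longrightarrow> 0 \<le> C \<Longrightarrow>
       (\<lambda>n. INF P\<in>\<P>. ereal (measure (\<mu> P)
          {\<omega>\<in>\<Omega>. integral {x0 - \<epsilon>/2..x0} (deriv (deriv (U n \<omega>))) < - C / \<epsilon>})) \<longlonglongrightarrow> 1"
    and x: "0 \<le> x" "x < x0" and L: "0 \<le> L"
  shows "(\<lambda>n. INF P\<in>\<P>. ereal (measure (\<mu> P) {\<omega>\<in>\<Omega>. util_ext (U n) \<omega> x \<le> - ereal L})) \<longlonglongrightarrow> 1"
proof (rule tendsto_INF_ereal_1I[OF ne])
  fix n P assume "P \<in> \<P>"
  then show "measure (\<mu> P) {\<omega>\<in>\<Omega>. util_ext (U n) \<omega> x \<le> - ereal L} \<le> 1"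
    using prob by (simp add: prob_space.prob_le_1)
next
  fix \<delta> :: real assume \<delta>: "0 < \<delta>"
  define K where "K = 2 * B / \<delta> + 1"
  define \<epsilon> where "\<epsilon> = (x0 - x) / 2"
  have K: "0 < K" "B / K < \<delta> / 2"
    using bound(2) \<delta> by (auto simp: K_def field_simps add_nonneg_pos)
  have \<epsilon>: "0 < \<epsilon>" "\<epsilon> < x0" "x \<le> x0 - \<epsilon>"
    using x by (auto simp: \<epsilon>_def field_simps)
  have "\<forall>\<^sub>F n in sequentially. \<forall>P\<in>\<P>. 1 - \<delta> / 2 < measure (\<mu> P)
      {\<omega>\<in>\<Omega>. integral {x0 - \<epsilon>/2..x0} (deriv (deriv (U n \<omega>))) < - (2 * (K + L)) / \<epsilon>}"
    using \<epsilon> K L \<delta> by (intro tendsto_INF_ereal_1D curv) auto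
  then show "\<forall>\<^sub>F n in sequentially.
      \<forall>P\<in>\<P>. 1 - \<delta> < measure (\<mu> P) {\<omega>\<in>\<Omega>. util_ext (U n) \<omega> x \<le> - ereal L}"
  proof (rule eventually_mono)
    fix n assume curv_n: "\<forall>P\<in>\<P>. 1 - \<delta> / 2 < measure (\<mu> P)
      {\<omega>\<in>\<Omega>. integral {x0 - \<epsilon>/2..x0} (deriv (deriv (U n \<omega>))) < - (2 * (K + L)) / \<epsilon>}"
    show "\<forall>P\<in>\<P>. 1 - \<delta> < measure (\<mu> P) {\<omega>\<in>\<Omega>. util_ext (U n) \<omega> x \<le> - ereal L}"
    proof
      fix P assume P: "P \<in> \<P>"
      have "measure (\<mu> P)
          {\<omega>\<in>space (\<mu> P). integral {x0 - \<epsilon>/2..x0} (deriv (deriv (U n \<omega>))) < - (2 * (K + L)) / \<epsilon>}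
          - B / K \<le> measure (\<mu> P) {\<omega>\<in>space (\<mu> P). util_ext (U n) \<omega> x \<le> - ereal L}"
        using utility space[OF P] by (intro measure_util_ext_le_lower_bound prob P meas bound K \<epsilon> x) auto
      then show "1 - \<delta> < measure (\<mu> P) {\<omega>\<in>\<Omega>. util_ext (U n) \<omega> x \<le> - ereal L}"
        using curv_n P K(2) unfolding space[OF P] by fastforce
    qed
  qed
qed

theorem lemma4p5:
  fixes X :: "nat \<Rightarrow> 'a topology" and T :: nat
    and Q :: "nat \<Rightarrow> (nat \<Rightarrow> 'a) \<Rightarrow> 'a measure set"
    and U :: "nat \<Rightarrow> (nat \<Rightarrow> 'a) \<Rightarrow> real \<Rightarrow> real"
    and x0 q :: real
  assumes T: "T \<ge> 1"
    and polish: "\<forall>t\<in>{1..T}. Polish_space (X t)"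
    and x0: "x0 > 0"
    and util: "\<forall>n. random_utility X T (U n)"
    and q: "q > 1"
    and pos: "(SUP n. rnorm X Q T 1 (\<lambda>\<omega>. max (U n \<omega> x0) 0)) < \<infinity>"
    and neg: "(SUP n. rnorm X Q T 1 (\<lambda>\<omega>. max (- U n \<omega> x0) 0)) < \<infinity>"
    and der: "(SUP n. rnorm X Q T q (\<lambda>\<omega>. deriv (U n \<omega>) x0)) < \<infinity>"
    and curv: "\<forall>\<epsilon>. 0 < \<epsilon> \<and> \<epsilon> < x0 \<longrightarrow> (\<forall>C\<ge>0.
       (\<lambda>n. INF P\<in>QT X Q T. ereal (measure (completion P)
          {\<omega>\<in>path_space X T. integral {x0 - \<epsilon>/2..x0} (\<lambda>v. deriv (deriv (U n \<omega>)) v) < - C / \<epsilon>}))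
       \<longlonglongrightarrow> 1)"
  shows "\<forall>x. 0 \<le> x \<and> x < x0 \<longrightarrow> (\<forall>M\<ge>0.
       (\<lambda>n. INF P\<in>QT X Q T. ereal (measure (completion P)
          {\<omega>\<in>path_space X T. util_ext (U n) \<omega> x \<le> - ereal M}))
       \<longlonglongrightarrow> 1)"
proof -
  let ?Q = "QT X Q T"
  have curv_Q: "(\<lambda>n. INF P\<in>?Q. ereal (measure (completion P)
      {\<omega>\<in>path_space X T. integral {x0 - \<epsilon>/2..x0} (deriv (deriv (U n \<omega>))) < - C / \<epsilon>})) \<longlonglongrightarrow> 1"
    if "0 < \<epsilon>" "\<epsilon> < x0" "0 \<le> C" for \<epsilon> C
    using curv[rule_format, OF conjI[OF that(1,2)] that(3)] .
  obtain A where curv_half: "(\<lambda>n. INF P\<in>?Q. ereal (measure (completion P) (A n))) \<longlonglongrightarrow> 1"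
    by (rule that[OF curv_Q[of "x0 / 2" 0]]) (use x0 in auto)
  \<comment> \<open>the curvature hypothesis rules out null measures in \<open>\<Q>\<^sup>T\<close>\<close>
  have prob: "prob_space (completion P)" if "P \<in> ?Q" for P
    using curv_half that QT_prob_space_or_null[OF that]
    by (intro prob_space.prob_space_completion prob_space_if_INF_measure_tendsto_1)
  have space: "space (completion P) = path_space X T" if "P \<in> ?Q" for P
    using space_QT[OF that] by simp
  have meas: "\<forall>y>0. (\<lambda>\<omega>. U n \<omega> y) \<in> borel_measurable (completion P)" if "P \<in> ?Q" for n P
    using util that curv_half QT_prob_space_or_null[OF that]
    by (intro borel_measurable_random_utility prob_space_if_INF_measure_tendsto_1) auto
  obtain B where B: "0 \<le> B"
    and bound: "\<And>n P. P \<in> ?Q \<Longrightarrow> (\<integral>\<^sup>+\<omega>. ennreal \<bar>max (U n \<omega> x0) 0\<bar> \<partial>completion P) \<le> ennreal B"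
    using nn_integral_bounded_if_SUP_rnorm_1[OF pos] by blast
  have bound': "(\<integral>\<^sup>+\<omega>. ennreal (max (U n \<omega> x0) 0) \<partial>completion P) \<le> ennreal B" if "P \<in> ?Q" for n P
    using bound[OF that] by simp
  show ?thesis
    using tendsto_INF_measure_util_ext_le[OF tendsto_INF_ereal_1_nonempty[OF curv_half] prob space
        random_utility_concave_mono_differentiable[OF util[rule_format]] meas bound' B curv_Q]
    by blast
qed

end
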